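(* Let $J,\mu\in\mathbb{R}$, $\Delta\neq0$, $T>0$, and let $(\kappa_l)_{l\ge1}$ be any real sequence. There is a constant $C$ depending only on $J,\mu,\Delta,T$ (not on $N$, $k$ or $\kappa$) such that for every even $N\ge4$ and every $k\in\{(2n+1)\pi/N:n=0,\dots,N-1\}$ with $\epsilon(k)>0$, $$\Big|\mathscr{E}_\Delta(k)-\tfrac{T}{2}|f_N(k)|\Big|\le C .$$ Consequently, with $\gamma(N)=\sum_{n=0}^{N-1}|f_N(k_n)|$ and the uncontrolled quantum Fisher information $I(\Delta)=\big(\sum_k\mathscr{E}_\Delta(k)\big)^2$ (sum over those $k$ with $\epsilon(k)>0$, all others having $f_N(k)=0$), one has $\big|\sqrt{I(\Delta)}-T\gamma(N)/2\big|\le CN$; hence the divergence near $k=0$ and the leading scaling with $N$ are the same as for the optimally controlled value $I_0(\Delta)=[\gamma(N)/2]^2T^2$ whenever $\gamma(N)$ grows at least linearly in $N$.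
   Context: Let $f_N(k)=2\sum_{l=1}^{N/2-1}\kappa_l\sin(kl)+\kappa_{N/2}$ and $\epsilon(k)=\sqrt{[\Delta f_N(k)/2]^2+(J\cos k+\mu)^2}$ (the Bogoliubov quasiparticle energy of the long-range Kitaev chain). For a parameter $\theta$, given real functions $a_\theta(k)$ and $\xi_\theta(k)$, set $$\mathscr{E}_\theta(k)=\Big\{T^2a_\theta(k)^2+\tfrac14\xi_\theta(k)^2\sin^2[2\epsilon(k)T]+\tfrac14\xi_\theta(k)^2\big(1-\cos[2\epsilon(k)T]\big)^2\Big\}^{1/2},$$ the single-mode eigenvalues of the estimation generator. For $\theta=\Delta$: $a_\Delta(k)=\partial_\Delta\epsilon(k)=\Delta f_N(k)^2/[4\epsilon(k)]$ and $\xi_\Delta(k)=-(J\cos k+\mu)f_N(k)/[2\epsilon(k)^2]$. *)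

theory Defs
  imports Complex_Main
begin

text \<open>Long-range Kitaev chain: pairing profile f_N(k); kappa is indexed from 1 (kappa 0 unused).\<close>
definition fN :: "(nat \<Rightarrow> real) \<Rightarrow> nat \<Rightarrow> real \<Rightarrow> real" where
  "fN \<kappa> N k = 2 * (\<Sum>l=1..N div 2 - 1. \<kappa> l * sin (k * real l)) + \<kappa> (N div 2)"

definition eps :: "real \<Rightarrow> real \<Rightarrow> real \<Rightarrow> (nat \<Rightarrow> real) \<Rightarrow> nat \<Rightarrow> real \<Rightarrow> real" where
  "eps J \<mu> \<Delta> \<kappa> N k = sqrt ((\<Delta> * fN \<kappa> N k / 2)\<^sup>2 + (J * cos k + \<mu>)\<^sup>2)"

text \<open>a_Delta(k) = d eps / d Delta.\<close>
definition aDelta :: "real \<Rightarrow> real \<Rightarrow> real \<Rightarrow> (nat \<Rightarrow> real) \<Rightarrow> nat \<Rightarrow> real \<Rightarrow> real" where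
  "aDelta J \<mu> \<Delta> \<kappa> N k = \<Delta> * (fN \<kappa> N k)\<^sup>2 / (4 * eps J \<mu> \<Delta> \<kappa> N k)"

definition xiDelta :: "real \<Rightarrow> real \<Rightarrow> real \<Rightarrow> (nat \<Rightarrow> real) \<Rightarrow> nat \<Rightarrow> real \<Rightarrow> real" where
  "xiDelta J \<mu> \<Delta> \<kappa> N k =
     - (J * cos k + \<mu>) * fN \<kappa> N k / (2 * (eps J \<mu> \<Delta> \<kappa> N k)\<^sup>2)"

definition scrE :: "real \<Rightarrow> real \<Rightarrow> real \<Rightarrow> real \<Rightarrow> real" where
  "scrE T a \<xi> \<epsilon> = sqrt (T\<^sup>2 * a\<^sup>2 + \<xi>\<^sup>2 / 4 * (sin (2 * \<epsilon> * T))\<^sup>2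
                          + \<xi>\<^sup>2 / 4 * (1 - cos (2 * \<epsilon> * T))\<^sup>2)"

definition scrE_Delta :: "real \<Rightarrow> real \<Rightarrow> real \<Rightarrow> real \<Rightarrow> (nat \<Rightarrow> real) \<Rightarrow> nat \<Rightarrow> real \<Rightarrow> real" where
  "scrE_Delta J \<mu> \<Delta> T \<kappa> N k =
     scrE T (aDelta J \<mu> \<Delta> \<kappa> N k) (xiDelta J \<mu> \<Delta> \<kappa> N k) (eps J \<mu> \<Delta> \<kappa> N k)"

definition kmom :: "nat \<Rightarrow> nat \<Rightarrow> real" where
  "kmom N n = (2 * real n + 1) * pi / real N"

definition momenta :: "nat \<Rightarrow> real set" where
  "momenta N = kmom N ` {..<N}"

definition gammaN :: "(nat \<Rightarrow> real) \<Rightarrow> nat \<Rightarrow> real" where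
  "gammaN \<kappa> N = (\<Sum>n<N. \<bar>fN \<kappa> N (kmom N n)\<bar>)"

definition QFI :: "real \<Rightarrow> real \<Rightarrow> real \<Rightarrow> real \<Rightarrow> (nat \<Rightarrow> real) \<Rightarrow> nat \<Rightarrow> real" where
  "QFI J \<mu> \<Delta> T \<kappa> N =
     (\<Sum>k\<in>{k\<in>momenta N. eps J \<mu> \<Delta> \<kappa> N k > 0}. scrE_Delta J \<mu> \<Delta> T \<kappa> N k)\<^sup>2"

end

theory Submission
  imports Defs
begin

text \<open>Write \<open>x = \<bar>\<Delta> f\<^sub>N(k)\<bar>/2\<close>, \<open>y = \<bar>J cos k + \<mu>\<bar>\<close>, so that \<open>\<epsilon> = sqrt (x\<^sup>2 + y\<^sup>2)\<close>.
  Then \<open>T \<bar>a\<^sub>\<Delta>\<bar> = (T/2) \<bar>f\<^sub>N\<bar> x/\<epsilon>\<close> falls short of \<open>(T/2) \<bar>f\<^sub>N\<bar>\<close> by at most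
  \<open>T y/(2\<bar>\<Delta>\<bar>)\<close>, while the oscillating part of \<open>\<E>\<^sub>\<Delta>\<close> contributes at most
  \<open>\<bar>\<xi>\<^sub>\<Delta>\<bar> = x y/(\<bar>\<Delta>\<bar> \<epsilon>\<^sup>2) \<le> 1/(2\<bar>\<Delta>\<bar>)\<close>. Both bounds are uniform in \<open>N\<close>, \<open>k\<close>
  and \<open>\<kappa>\<close>; summing over the at most \<open>N\<close> momenta gives the estimate for \<open>sqrt I(\<Delta>)\<close>,
  the momenta with \<open>\<epsilon>(k) = 0\<close> contributing nothing to \<open>\<gamma>(N)\<close> since there \<open>f\<^sub>N(k) = 0\<close>.\<close>

lemma scrE_eq: "scrE T a \<xi> e = sqrt ((T * a)\<^sup>2 + \<xi>\<^sup>2 * (1 - cos (2 * e * T)) / 2)"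
proof -
  have "(sin (2 * e * T))\<^sup>2 + (1 - cos (2 * e * T))\<^sup>2 = 2 * (1 - cos (2 * e * T))"
    using sin_cos_squared_add[of "2 * e * T"] by (simp add: power2_eq_square algebra_simps)
  then have "\<xi>\<^sup>2 / 4 * (sin (2 * e * T))\<^sup>2 + \<xi>\<^sup>2 / 4 * (1 - cos (2 * e * T))\<^sup>2
      = \<xi>\<^sup>2 * (1 - cos (2 * e * T)) / 2"
    by (simp only: distrib_left[symmetric])
  then show ?thesis
    unfolding scrE_def add.assoc power_mult_distrib by (rule arg_cong)
qed

lemma scrE_bounds: "\<bar>T * a\<bar> \<le> scrE T a \<xi> e" "scrE T a \<xi> e \<le> \<bar>T * a\<bar> + \<bar>\<xi>\<bar>"
proof -
  define B where "B = \<xi>\<^sup>2 * (1 - cos (2 * e * T)) / 2"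
  have "0 \<le> 1 - cos (2 * e * T)" "1 - cos (2 * e * T) \<le> 2"
    using abs_cos_le_one[of "2 * e * T"] by linarith+
  then have B: "0 \<le> B" "B \<le> \<xi>\<^sup>2"
    unfolding B_def using mult_left_mono[of "1 - cos (2 * e * T)" 2 "\<xi>\<^sup>2"] by auto
  have "\<bar>T * a\<bar> = sqrt ((T * a)\<^sup>2)" by simp
  also have "\<dots> \<le> sqrt ((T * a)\<^sup>2 + B)" using B by (intro real_sqrt_le_mono) simp
  finally show "\<bar>T * a\<bar> \<le> scrE T a \<xi> e" by (simp add: scrE_eq B_def)
  have "sqrt ((T * a)\<^sup>2 + B) \<le> sqrt ((T * a)\<^sup>2) + sqrt B"
    using B by (intro sqrt_add_le_add_sqrt) auto
  also have "\<dots> \<le> \<bar>T * a\<bar> + \<bar>\<xi>\<bar>" using B real_sqrt_le_mono[of B "\<xi>\<^sup>2"] by simp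
  finally show "scrE T a \<xi> e \<le> \<bar>T * a\<bar> + \<bar>\<xi>\<bar>" by (simp add: scrE_eq B_def)
qed

lemma mult_hypot_minus_le:
  fixes x y :: real
  assumes "0 \<le> x" "0 \<le> y"
  shows "x * (sqrt (x\<^sup>2 + y\<^sup>2) - x) \<le> sqrt (x\<^sup>2 + y\<^sup>2) * y / 2"
proof -
  define e where "e = sqrt (x\<^sup>2 + y\<^sup>2)"
  have e2: "e\<^sup>2 = x\<^sup>2 + y\<^sup>2" unfolding e_def by simp
  have "0 \<le> e" by (simp add: e_def)
  have "x * (e - x) * (e + x) = x * (e\<^sup>2 - x\<^sup>2)"
    by (simp add: algebra_simps power2_eq_square)
  also have "\<dots> = x * y\<^sup>2"
    using e2 by simp
  also have "\<dots> \<le> e * y / 2 * (e + x)"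
  proof -
    have "2 * x * y \<le> e * (e + x)"
      using e2 sum_squares_bound[of x y] mult_nonneg_nonneg[OF \<open>0 \<le> e\<close> \<open>0 \<le> x\<close>]
      by (simp add: power2_eq_square distrib_left)
    then have "y * (2 * x * y) \<le> y * (e * (e + x))"
      using \<open>0 \<le> y\<close> by (rule mult_left_mono)
    then show ?thesis by (simp add: algebra_simps power2_eq_square)
  qed
  finally have key: "x * (e - x) * (e + x) \<le> e * y / 2 * (e + x)" .
  show ?thesis
  proof (cases "x = 0")
    case True
    then show ?thesis using \<open>0 \<le> y\<close> by simp
  next
    case False
    then have "0 < e + x" using assms \<open>0 \<le> e\<close> by linarith
    with key have "x * (e - x) \<le> e * y / 2" by (rule mult_right_le_imp_le)
    then show ?thesis by (simp add: e_def)
  qed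
qed

lemma aDelta_deficit_bounds:
  assumes "\<Delta> \<noteq> 0" "eps J \<mu> \<Delta> \<kappa> N k > 0"
  shows "0 \<le> \<bar>fN \<kappa> N k\<bar> / 2 - \<bar>aDelta J \<mu> \<Delta> \<kappa> N k\<bar>"
    and "\<bar>fN \<kappa> N k\<bar> / 2 - \<bar>aDelta J \<mu> \<Delta> \<kappa> N k\<bar> \<le> \<bar>J * cos k + \<mu>\<bar> / (2 * \<bar>\<Delta>\<bar>)"
proof -
  define x where "x = \<bar>\<Delta> * fN \<kappa> N k\<bar> / 2"
  define y where "y = \<bar>J * cos k + \<mu>\<bar>"
  define e where "e = eps J \<mu> \<Delta> \<kappa> N k"
  have e: "e = sqrt (x\<^sup>2 + y\<^sup>2)"
    by (simp add: e_def eps_def x_def y_def power_divide power_mult_distrib)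
  have "0 \<le> x" "0 \<le> y" "0 < e" using assms(2) by (auto simp: x_def y_def e_def)
  have "x \<le> e" unfolding e by (rule real_le_rsqrt) simp
  have deficit: "\<bar>fN \<kappa> N k\<bar> / 2 - \<bar>aDelta J \<mu> \<Delta> \<kappa> N k\<bar> = x * (e - x) / (\<bar>\<Delta>\<bar> * e)"
    using assms(1) \<open>0 < e\<close>
    by (simp add: aDelta_def e_def[symmetric] x_def abs_mult power2_eq_square field_simps)
  show "0 \<le> \<bar>fN \<kappa> N k\<bar> / 2 - \<bar>aDelta J \<mu> \<Delta> \<kappa> N k\<bar>"
    unfolding deficit using \<open>0 \<le> x\<close> \<open>x \<le> e\<close> \<open>0 < e\<close> by simp
  have "x * (e - x) / (\<bar>\<Delta>\<bar> * e) \<le> e * y / 2 / (\<bar>\<Delta>\<bar> * e)"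
    using mult_hypot_minus_le[OF \<open>0 \<le> x\<close> \<open>0 \<le> y\<close>] assms(1) \<open>0 < e\<close> e
    by (intro divide_right_mono) auto
  then show "\<bar>fN \<kappa> N k\<bar> / 2 - \<bar>aDelta J \<mu> \<Delta> \<kappa> N k\<bar> \<le> \<bar>J * cos k + \<mu>\<bar> / (2 * \<bar>\<Delta>\<bar>)"
    unfolding deficit using \<open>0 < e\<close> by (simp add: y_def)
qed

lemma abs_xiDelta_le:
  assumes "\<Delta> \<noteq> 0" "eps J \<mu> \<Delta> \<kappa> N k > 0"
  shows "\<bar>xiDelta J \<mu> \<Delta> \<kappa> N k\<bar> \<le> 1 / (2 * \<bar>\<Delta>\<bar>)"
proof -
  define x where "x = \<bar>\<Delta> * fN \<kappa> N k\<bar> / 2"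
  define y where "y = \<bar>J * cos k + \<mu>\<bar>"
  define e where "e = eps J \<mu> \<Delta> \<kappa> N k"
  have e2: "e\<^sup>2 = x\<^sup>2 + y\<^sup>2"
    by (simp add: e_def eps_def x_def y_def power_divide power_mult_distrib)
  have "0 < e" using assms(2) by (simp add: e_def)
  have "xiDelta J \<mu> \<Delta> \<kappa> N k = - ((J * cos k + \<mu>) * fN \<kappa> N k / (2 * e\<^sup>2))"
    unfolding xiDelta_def e_def by (simp only: mult_minus_left minus_divide_left)
  then have "\<bar>xiDelta J \<mu> \<Delta> \<kappa> N k\<bar> = \<bar>(J * cos k + \<mu>) * fN \<kappa> N k\<bar> / (2 * e\<^sup>2)"
    by (simp add: abs_divide)
  also have "\<dots> = y * \<bar>fN \<kappa> N k\<bar> / (2 * e\<^sup>2)"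
    by (simp add: y_def abs_mult)
  also have "\<dots> = x * y / (\<bar>\<Delta>\<bar> * e\<^sup>2)"
    using assms(1) by (simp add: x_def abs_mult)
  finally have xi: "\<bar>xiDelta J \<mu> \<Delta> \<kappa> N k\<bar> = x * y / (\<bar>\<Delta>\<bar> * e\<^sup>2)" .
  have "x * y / (\<bar>\<Delta>\<bar> * e\<^sup>2) \<le> e\<^sup>2 / 2 / (\<bar>\<Delta>\<bar> * e\<^sup>2)"
    using sum_squares_bound[of x y] e2 assms(1) by (intro divide_right_mono) auto
  then show ?thesis unfolding xi using \<open>0 < e\<close> by simp
qed

lemma scrE_Delta_minus_half_fN_bound:
  assumes "\<Delta> \<noteq> 0" "0 \<le> T" "eps J \<mu> \<Delta> \<kappa> N k > 0"
  shows "\<bar>scrE_Delta J \<mu> \<Delta> T \<kappa> N k - T / 2 * \<bar>fN \<kappa> N k\<bar>\<bar>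
           \<le> T * (\<bar>J\<bar> + \<bar>\<mu>\<bar>) / (2 * \<bar>\<Delta>\<bar>) + 1 / (2 * \<bar>\<Delta>\<bar>)"
proof -
  define a where "a = aDelta J \<mu> \<Delta> \<kappa> N k"
  define \<xi> where "\<xi> = xiDelta J \<mu> \<Delta> \<kappa> N k"
  define e where "e = eps J \<mu> \<Delta> \<kappa> N k"
  define d where "d = \<bar>fN \<kappa> N k\<bar> / 2 - \<bar>a\<bar>"
  have diff: "scrE_Delta J \<mu> \<Delta> T \<kappa> N k - T / 2 * \<bar>fN \<kappa> N k\<bar>
             = (scrE T a \<xi> e - T * \<bar>a\<bar>) - T * d"
    by (simp add: scrE_Delta_def a_def \<xi>_def e_def d_def algebra_simps)
  have "\<bar>J\<bar> * \<bar>cos k\<bar> \<le> \<bar>J\<bar>"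
    using abs_cos_le_one[of k] by (simp add: mult_left_le)
  then have "\<bar>J * cos k + \<mu>\<bar> \<le> \<bar>J\<bar> + \<bar>\<mu>\<bar>"
    using abs_triangle_ineq[of "J * cos k" \<mu>] by (simp add: abs_mult)
  then have "d \<le> (\<bar>J\<bar> + \<bar>\<mu>\<bar>) / (2 * \<bar>\<Delta>\<bar>)"
    using aDelta_deficit_bounds(2)[OF assms(1,3)] divide_right_mono[of _ _ "2 * \<bar>\<Delta>\<bar>"]
    unfolding d_def a_def by fastforce
  then have "T * d \<le> T * (\<bar>J\<bar> + \<bar>\<mu>\<bar>) / (2 * \<bar>\<Delta>\<bar>)"
    using mult_left_mono[OF _ assms(2)] by fastforce
  moreover have "0 \<le> T * d"
    using aDelta_deficit_bounds(1)[OF assms(1,3)] assms(2) by (simp add: d_def a_def)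
  moreover have "T * \<bar>a\<bar> \<le> scrE T a \<xi> e" "scrE T a \<xi> e \<le> T * \<bar>a\<bar> + 1 / (2 * \<bar>\<Delta>\<bar>)"
    using scrE_bounds[of T a \<xi> e] abs_xiDelta_le[OF assms(1,3)] assms(2)
    by (simp_all add: \<xi>_def abs_mult)
  moreover have "0 \<le> 1 / (2 * \<bar>\<Delta>\<bar>)" by simp
  ultimately show ?thesis
    unfolding diff abs_le_iff by linarith
qed

lemma fN_eq_0_if_eps_nonpos:
  assumes "\<Delta> \<noteq> 0" "eps J \<mu> \<Delta> \<kappa> N k \<le> 0"
  shows "fN \<kappa> N k = 0"
proof -
  have "(\<Delta> * fN \<kappa> N k / 2)\<^sup>2 + (J * cos k + \<mu>)\<^sup>2 \<le> 0"
    using assms(2) by (simp add: eps_def)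
  then show ?thesis
    using assms(1) by (simp only: sum_power2_le_zero_iff) simp
qed

lemma inj_on_kmom: "inj_on (kmom N) {..<N}"
  by (auto simp: inj_on_def kmom_def)

lemma card_momenta: "card (momenta N) = N"
  by (simp add: momenta_def card_image inj_on_kmom)

lemma gammaN_eq_sum_momenta: "gammaN \<kappa> N = (\<Sum>k\<in>momenta N. \<bar>fN \<kappa> N k\<bar>)"
  by (simp add: gammaN_def momenta_def sum.reindex inj_on_kmom)

lemma sqrt_QFI_minus_gammaN_bound:
  assumes "\<Delta> \<noteq> 0"
    and bound: "\<And>k. eps J \<mu> \<Delta> \<kappa> N k > 0 \<Longrightarrow>
                  \<bar>scrE_Delta J \<mu> \<Delta> T \<kappa> N k - T / 2 * \<bar>fN \<kappa> N k\<bar>\<bar> \<le> C"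
    and "0 \<le> C"
  shows "\<bar>sqrt (QFI J \<mu> \<Delta> T \<kappa> N) - T * gammaN \<kappa> N / 2\<bar> \<le> C * real N"
proof -
  define S where "S = {k\<in>momenta N. eps J \<mu> \<Delta> \<kappa> N k > 0}"
  have fin: "finite (momenta N)" by (simp add: momenta_def)
  have "card S \<le> N"
    using card_mono[OF fin] card_momenta[of N] by (fastforce simp: S_def)
  have "\<bar>fN \<kappa> N k\<bar> = 0" if "k \<in> momenta N - S" for k
    using that fN_eq_0_if_eps_nonpos[OF assms(1), of J \<mu> \<kappa> N k] by (auto simp: S_def not_less)
  then have "gammaN \<kappa> N = (\<Sum>k\<in>S. \<bar>fN \<kappa> N k\<bar>)"
    unfolding gammaN_eq_sum_momenta using fin by (intro sum.mono_neutral_right) (auto simp: S_def)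
  moreover have "sqrt (QFI J \<mu> \<Delta> T \<kappa> N) = (\<Sum>k\<in>S. scrE_Delta J \<mu> \<Delta> T \<kappa> N k)"
    by (simp add: QFI_def S_def[symmetric] scrE_Delta_def scrE_def sum_nonneg)
  ultimately have "\<bar>sqrt (QFI J \<mu> \<Delta> T \<kappa> N) - T * gammaN \<kappa> N / 2\<bar>
      = \<bar>\<Sum>k\<in>S. scrE_Delta J \<mu> \<Delta> T \<kappa> N k - T / 2 * \<bar>fN \<kappa> N k\<bar>\<bar>"
    by (simp add: sum_subtractf sum_distrib_left sum_divide_distrib)
  also have "\<dots> \<le> (\<Sum>k\<in>S. \<bar>scrE_Delta J \<mu> \<Delta> T \<kappa> N k - T / 2 * \<bar>fN \<kappa> N k\<bar>\<bar>)"
    by (rule sum_abs)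
  also have "\<dots> \<le> C * real (card S)"
    using sum_mono[of S _ "\<lambda>_. C"] bound by (simp add: S_def mult.commute)
  also have "\<dots> \<le> C * real N" using \<open>card S \<le> N\<close> \<open>0 \<le> C\<close> by (simp add: mult_left_mono)
  finally show ?thesis .
qed

theorem mainTheorem9:
  fixes J \<mu> \<Delta> T :: real
  assumes "\<Delta> \<noteq> 0" and "T > 0"
  shows "\<exists>C::real.
    (\<forall>(\<kappa>::nat \<Rightarrow> real) (N::nat) k. even N \<longrightarrow> N \<ge> 4 \<longrightarrow> k \<in> momenta N \<longrightarrow>
        eps J \<mu> \<Delta> \<kappa> N k > 0 \<longrightarrow>
        \<bar>scrE_Delta J \<mu> \<Delta> T \<kappa> N k - T / 2 * \<bar>fN \<kappa> N k\<bar>\<bar> \<le> C)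
  \<and> (\<forall>(\<kappa>::nat \<Rightarrow> real) (N::nat). even N \<longrightarrow> N \<ge> 4 \<longrightarrow>
        \<bar>sqrt (QFI J \<mu> \<Delta> T \<kappa> N) - T * gammaN \<kappa> N / 2\<bar> \<le> C * real N)"
proof -
  define C where "C = T * (\<bar>J\<bar> + \<bar>\<mu>\<bar>) / (2 * \<bar>\<Delta>\<bar>) + 1 / (2 * \<bar>\<Delta>\<bar>)"
  have "0 \<le> C" using assms by (simp add: C_def)
  have pointwise: "\<And>\<kappa> N k. eps J \<mu> \<Delta> \<kappa> N k > 0 \<Longrightarrow>
      \<bar>scrE_Delta J \<mu> \<Delta> T \<kappa> N k - T / 2 * \<bar>fN \<kappa> N k\<bar>\<bar> \<le> C"
    using scrE_Delta_minus_half_fN_bound assms by (simp add: C_def)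
  show ?thesis
    using pointwise sqrt_QFI_minus_gammaN_bound[OF assms(1) pointwise \<open>0 \<le> C\<close>] by blast
qed

end
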